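(* Let $X$ be a finite set and let $\{A_1,\ldots,A_k\}$ and $\{B_1,\ldots,B_k\}$ be two partitions of $X$ with $|A_i|=|B_i|$ for every $i=1,\ldots,k$. Let $\mathcal G=(V,E)$ be the directed graph on the nodes $V=\{1,\ldots,k\}$ in which $(i,j)\in E$ if and only if $A_i\cap B_j\neq\emptyset$. If $(i,j)\in E$, then there exists a directed path from $j$ to $i$.
   Context: A directed path from $i$ to $j$ is a sequence of nodes $i_1i_2\ldots i_q$ with $i_1=i$, $i_q=j$ and $(i_a,i_{a+1})\in E$ for all $a$; the one-node sequence $i$ is a directed path from $i$ to itself. Partition members may be empty. *)

theory Defs
  imports Main
begin

definition is_partition :: "'a set \<Rightarrow> nat \<Rightarrow> (nat \<Rightarrow> 'a set) \<Rightarrow> bool" where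
  "is_partition X k P \<longleftrightarrow>
     (\<Union>i\<in>{1..k}. P i) = X \<and>
     (\<forall>i\<in>{1..k}. \<forall>j\<in>{1..k}. i \<noteq> j \<longrightarrow> P i \<inter> P j = {})"

definition part_graph :: "nat \<Rightarrow> (nat \<Rightarrow> 'a set) \<Rightarrow> (nat \<Rightarrow> 'a set) \<Rightarrow> (nat \<times> nat) set" where
  "part_graph k A B = {(i, j). i \<in> {1..k} \<and> j \<in> {1..k} \<and> A i \<inter> B j \<noteq> {}}"

definition directed_path :: "('v \<times> 'v) set \<Rightarrow> 'v list \<Rightarrow> 'v \<Rightarrow> 'v \<Rightarrow> bool" where
  "directed_path E p i j \<longleftrightarrow>
     p \<noteq> [] \<and> hd p = i \<and> last p = j \<and>
     (\<forall>a. Suc a < length p \<longrightarrow> (p ! a, p ! Suc a) \<in> E)"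

end

theory Submission
  imports Defs
begin

text \<open>The set \<open>S\<close> of nodes reachable from \<open>j\<close> is closed under successors, so every
  \<open>A\<^sub>l\<close> with \<open>l \<in> S\<close> is covered by the blocks \<open>B\<^sub>m\<close> with \<open>m \<in> S\<close>. Both unions have the same
  cardinality, hence they coincide. A point of \<open>A\<^sub>i \<inter> B\<^sub>j\<close> lies in this union, and since the
  \<open>A\<^sub>l\<close> are disjoint, \<open>i \<in> S\<close>.\<close>

lemma directed_path_if_rtrancl:
  assumes "(x, y) \<in> E\<^sup>*"
  shows "\<exists>p. directed_path E p x y"
  using assms
proof (induction rule: rtrancl_induct)
  case base
  have "directed_path E [x] x x" by (simp add: directed_path_def)
  then show ?case by blast
next
  case (step y z)
  then obtain p where p: "directed_path E p x y" by blast
  have "directed_path E (p @ [z]) x z"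
    unfolding directed_path_def
  proof (intro conjI allI impI)
    fix a assume a: "Suc a < length (p @ [z])"
    show "((p @ [z]) ! a, (p @ [z]) ! Suc a) \<in> E"
    proof (cases "Suc a < length p")
      case True
      then show ?thesis using p by (simp add: directed_path_def nth_append)
    next
      case False
      then have "Suc a = length p" using a by simp
      moreover have "p ! a = y"
        using p \<open>Suc a = length p\<close> unfolding directed_path_def
        by (metis diff_Suc_1 last_conv_nth)
      ultimately show ?thesis using step(2) by (simp add: nth_append)
    qed
  qed (use p in \<open>auto simp: directed_path_def\<close>)
  then show ?case by blast
qed

lemma is_partition_subset:
  "is_partition X k P \<Longrightarrow> l \<in> {1..k} \<Longrightarrow> P l \<subseteq> X"
  by (auto simp: is_partition_def)

lemma is_partition_index_unique:
  "is_partition X k P \<Longrightarrow> l \<in> {1..k} \<Longrightarrow> m \<in> {1..k} \<Longrightarrow> x \<in> P l \<Longrightarrow> x \<in> P m \<Longrightarrow> l = m"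
  unfolding is_partition_def by blast

lemma card_UN_is_partition:
  assumes "finite X" "is_partition X k P" "S \<subseteq> {1..k}"
  shows "card (\<Union>m\<in>S. P m) = (\<Sum>m\<in>S. card (P m))"
proof (rule card_UN_disjoint)
  show "finite S" using assms(3) finite_subset by blast
  show "\<forall>m\<in>S. finite (P m)"
    using assms by (meson finite_subset is_partition_subset subsetD)
  show "\<forall>l\<in>S. \<forall>m\<in>S. l \<noteq> m \<longrightarrow> P l \<inter> P m = {}"
    using assms(2,3) by (auto simp: is_partition_def)
qed

lemma part_graph_closed_UN_subset:
  assumes "is_partition X k A" "is_partition X k B" "S \<subseteq> {1..k}"
    and closed: "\<forall>l\<in>S. \<forall>m. (l, m) \<in> part_graph k A B \<longrightarrow> m \<in> S"
  shows "(\<Union>l\<in>S. A l) \<subseteq> (\<Union>m\<in>S. B m)"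
proof
  fix x assume "x \<in> (\<Union>l\<in>S. A l)"
  then obtain l where l: "l \<in> S" "x \<in> A l" by blast
  then have "x \<in> X" using assms(1,3) is_partition_subset by blast
  then obtain m where m: "m \<in> {1..k}" "x \<in> B m"
    using assms(2) by (auto simp: is_partition_def)
  have "(l, m) \<in> part_graph k A B" using l m assms(3) by (auto simp: part_graph_def)
  then have "m \<in> S" using closed l(1) by blast
  then show "x \<in> (\<Union>m\<in>S. B m)" using m(2) by blast
qed

lemma part_graph_closed_imp_predecessor_closed:
  assumes "finite X" and A: "is_partition X k A" and B: "is_partition X k B"
    and card_eq: "\<forall>l\<in>{1..k}. card (A l) = card (B l)"
    and S: "S \<subseteq> {1..k}"
    and closed: "\<forall>l\<in>S. \<forall>m. (l, m) \<in> part_graph k A B \<longrightarrow> m \<in> S"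
    and edge: "(i, j) \<in> part_graph k A B" and "j \<in> S"
  shows "i \<in> S"
proof -
  have sub: "(\<Union>l\<in>S. A l) \<subseteq> (\<Union>m\<in>S. B m)"
    using part_graph_closed_UN_subset[OF A B S closed] .
  have "(\<Sum>l\<in>S. card (A l)) = (\<Sum>m\<in>S. card (B m))"
    using card_eq S by (intro sum.cong) auto
  then have "card (\<Union>l\<in>S. A l) = card (\<Union>m\<in>S. B m)"
    by (simp add: card_UN_is_partition[OF \<open>finite X\<close> A S] card_UN_is_partition[OF \<open>finite X\<close> B S])
  moreover have "finite (\<Union>m\<in>S. B m)"
    using is_partition_subset[OF B] S \<open>finite X\<close> by (meson UN_least finite_subset subsetD)
  ultimately have eq: "(\<Union>l\<in>S. A l) = (\<Union>m\<in>S. B m)"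
    using sub card_subset_eq by metis
  obtain x where x: "x \<in> A i" "x \<in> B j" and "i \<in> {1..k}"
    using edge by (auto simp: part_graph_def)
  have "x \<in> (\<Union>l\<in>S. A l)" using eq x(2) \<open>j \<in> S\<close> by blast
  then obtain l where "l \<in> S" "x \<in> A l" by blast
  have "l = i"
    using is_partition_index_unique[OF A _ \<open>i \<in> {1..k}\<close> \<open>x \<in> A l\<close> x(1)] S \<open>l \<in> S\<close>
    by (meson subsetD)
  with \<open>l \<in> S\<close> show "i \<in> S" by simp
qed

theorem lemma3p25:
  fixes X :: "'a set" and k :: nat and A B :: "nat \<Rightarrow> 'a set" and i j :: nat
  assumes "finite X"
    and "is_partition X k A"
    and "is_partition X k B"
    and "\<forall>l\<in>{1..k}. card (A l) = card (B l)"
    and "(i, j) \<in> part_graph k A B"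
  shows "\<exists>p. directed_path (part_graph k A B) p j i"
proof -
  let ?E = "part_graph k A B"
  define S where "S = ?E\<^sup>* `` {j}"
  have "j \<in> {1..k}" using assms(5) by (auto simp: part_graph_def)
  have "S \<subseteq> {1..k}"
  proof
    fix l assume "l \<in> S"
    then have "(j, l) \<in> ?E\<^sup>*" by (simp add: S_def)
    then show "l \<in> {1..k}"
      by (induction rule: rtrancl_induct) (use \<open>j \<in> {1..k}\<close> in \<open>auto simp: part_graph_def\<close>)
  qed
  moreover have "\<forall>l\<in>S. \<forall>m. (l, m) \<in> ?E \<longrightarrow> m \<in> S"
    by (auto simp: S_def intro: rtrancl_into_rtrancl)
  moreover have "j \<in> S" by (simp add: S_def)
  ultimately have "i \<in> S"
    using part_graph_closed_imp_predecessor_closed assms by blast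
  then show ?thesis by (simp add: S_def directed_path_if_rtrancl)
qed

end
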